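(* Let $\ell\ge 1$ and $n,m_1,\dots,m_\ell$ be positive integers, $m:=\sum_{i=1}^\ell m_i$. For $i=1,\dots,\ell$ let $C_i\subseteq\mathbb{R}^{m_i}$ be a nonempty closed convex set and $A_i\in\mathbb{R}^{m_i\times n}$ a nonzero matrix, and let $\bar v\in\mathbb{R}^n$. Assume $\bigcap_{i=1}^\ell A_i^{-1}\operatorname{ri}C_i\neq\emptyset$. Let $\mathbf A\in\mathbb{R}^{m\times n}$ with $\mathbf A^T=[A_1^T\ \cdots\ A_\ell^T]$, $D:=C_1\times\cdots\times C_\ell$, $f(x):=\frac12\|x-\bar v\|^2$, $d(\mathbf y):=\frac12\|\mathbf A^T\mathbf y-\bar v\|^2-\frac12\|\bar v\|^2+\sigma_D(\mathbf y)$, $d^*:=\inf d$, and $q(\mathbf y):=\inf_{x\in\mathbb{R}^n}\{f(x)+\delta_D(\mathbf Ax+\mathbf y)\}$ for $\mathbf y\in\mathbb{R}^m$. Then $\mathbf 0\in\operatorname{ri}\operatorname{dom}q$. Moreover, $d(\mathbf y)=q^*(\mathbf y)$ for all $\mathbf y$, and $$\operatorname{Argmin} d=\partial q_E(\mathbf 0)+E^\perp\neq\emptyset,$$ where $q_E(\mathbf y):=q(\operatorname{Proj}_E(\mathbf y))$ and $E:=\operatorname{span}(\operatorname{dom}q)=\operatorname{span}(D-\operatorname{Range}(\mathbf A))$. Furthermore, every sequence $\{\mathbf z^t\}\subseteq\mathbb{R}^m$ with $\operatorname{dist}(\mathbf 0,\partial d(\mathbf z^t))\to0$ satisfies $d(\mathbf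 z^t)\to d^*$ and $\operatorname{dist}(\mathbf z^t,\operatorname{Argmin} d)\to0$.
   Context: $A_i^{-1}S:=\{x: A_ix\in S\}$; $\operatorname{ri}$ denotes relative interior; $\delta_D$ is the indicator function of $D$ ($0$ on $D$, $+\infty$ outside); $\sigma_D(\mathbf y):=\sup_{\mathbf u\in D}\langle\mathbf y,\mathbf u\rangle$ is the support function; $q^*$ is the convex conjugate of $q$; $\operatorname{dom}q:=\{\mathbf y: q(\mathbf y)<\infty\}$; $\partial$ is the convex subdifferential; $\operatorname{Proj}_E$ is the orthogonal projection onto the subspace $E$. *)

theory Defs
  imports "HOL-Analysis.Analysis"
begin

definition support_fun :: "'a::real_inner set \<Rightarrow> 'a \<Rightarrow> ereal" where
  "support_fun D y = (SUP u\<in>D. ereal (inner y u))"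

definition conjugate :: "('a::real_inner \<Rightarrow> ereal) \<Rightarrow> 'a \<Rightarrow> ereal" where
  "conjugate g y = (SUP z. ereal (inner y z) - g z)"

definition edom :: "('a \<Rightarrow> ereal) \<Rightarrow> 'a set" where
  "edom g = {y. g y < \<infinity>}"

definition subdiff :: "('a::real_inner \<Rightarrow> ereal) \<Rightarrow> 'a \<Rightarrow> 'a set" where
  "subdiff g x = {v. \<bar>g x\<bar> \<noteq> \<infinity> \<and> (\<forall>z. g x + ereal (inner v (z - x)) \<le> g z)}"

definition argmin_set :: "('a \<Rightarrow> ereal) \<Rightarrow> 'a set" where
  "argmin_set g = {y. \<forall>z. g y \<le> g z}"

text \<open>Distance from a point to a set, with the convention dist(x, {}) = +infinity.\<close>
definition edist_set :: "'a::metric_space \<Rightarrow> 'a set \<Rightarrow> ereal" where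
  "edist_set x S = (INF y\<in>S. ereal (dist x y))"

definition proj_sub :: "'a::euclidean_space set \<Rightarrow> 'a \<Rightarrow> 'a" where
  "proj_sub E y = closest_point E y"

text \<open>Block structure: coordinates j of R^m with blk j = i form the i-th block R^(m_i).
  block_part blk i y keeps the i-th block of y and zeroes the rest; a subset of R^(m_i)
  is represented as a subset of R^m supported on block i.\<close>
definition block_part :: "('m \<Rightarrow> nat) \<Rightarrow> nat \<Rightarrow> real^'m \<Rightarrow> real^'m" where
  "block_part blk i y = (\<chi> j. if blk j = i then y $ j else 0)"

definition block_space :: "('m \<Rightarrow> nat) \<Rightarrow> nat \<Rightarrow> (real^'m) set" where
  "block_space blk i = {y. \<forall>j. blk j \<noteq> i \<longrightarrow> y $ j = 0}"

end

theory Submission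
  imports Defs
begin

text \<open>
  The function q is the value function of the perturbed projection problem; its effective
  domain is D - Range A, and completing the square in x shows that d is its Fenchel conjugate.
  The qualification condition puts 0 into the relative interior of dom q, so the convex
  function q has a subgradient at 0. Hence Argmin d, the subdifferential of q at 0, is
  nonempty, and since dom q lies in E it splits into the subdifferential of q_E at 0 plus
  the orthogonal complement of E. As q is bounded above near 0 within E, d grows linearly
  in the E-component of its argument, while d is constant along the orthogonal complement.
  A small subgradient at z therefore bounds the E-component of z and forces d z close to d*;
  lower semicontinuity of the conjugate and compactness then give dist(z, Argmin d) -> 0.
\<close>

section \<open>Orthogonal projection onto a subspace\<close>

lemma closest_point_subspace_in:
  fixes E :: "'a::euclidean_space set"
  assumes "subspace E"
  shows "closest_point E y \<in> E"
  using closest_point_in_set[OF closed_subspace[OF assms]] subspace_0[OF assms] by blast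

lemma closest_point_subspace_orthogonal:
  fixes E :: "'a::euclidean_space set"
  assumes E: "subspace E" and e: "e \<in> E"
  shows "inner (y - closest_point E y) e = 0"
proof -
  let ?p = "closest_point E y"
  have p: "?p \<in> E" by (rule closest_point_subspace_in[OF E])
  have "inner (y - ?p) ((?p + e) - ?p) \<le> 0" "inner (y - ?p) ((?p - e) - ?p) \<le> 0"
    using closest_point_dot[OF subspace_imp_convex[OF E] closed_subspace[OF E]]
      subspace_add[OF E p e] subspace_diff[OF E p e] by blast+
  then show ?thesis by simp
qed

lemma closest_point_subspace_eqI:
  fixes E :: "'a::euclidean_space set"
  assumes E: "subspace E" and u: "u \<in> E" and orth: "\<And>e. e \<in> E \<Longrightarrow> inner (y - u) e = 0"
  shows "closest_point E y = u"
proof -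
  let ?w = "closest_point E y - u"
  have w: "?w \<in> E" using u closest_point_subspace_in[OF E] by (simp add: subspace_diff[OF E])
  have "inner (y - u) ?w = 0" "inner (y - closest_point E y) ?w = 0"
    using orth[OF w] closest_point_subspace_orthogonal[OF E w] .
  then have "inner ((y - u) - (y - closest_point E y)) ?w = 0"
    by (simp only: inner_diff_left)
  then show ?thesis by simp
qed

lemma linear_closest_point_subspace:
  fixes E :: "'a::euclidean_space set"
  assumes E: "subspace E"
  shows "linear (closest_point E)"
proof (rule linearI)
  note P_in = closest_point_subspace_in[OF E] and P_orth = closest_point_subspace_orthogonal[OF E]
  fix a b :: 'a
  show "closest_point E (a + b) = closest_point E a + closest_point E b"
  proof (rule closest_point_subspace_eqI[OF E])
    show "closest_point E a + closest_point E b \<in> E" using P_in E by (simp add: subspace_add)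
    fix e assume e: "e \<in> E"
    have "a + b - (closest_point E a + closest_point E b)
        = (a - closest_point E a) + (b - closest_point E b)" by simp
    then show "inner (a + b - (closest_point E a + closest_point E b)) e = 0"
      using P_orth[OF e, of a] P_orth[OF e, of b] by (simp only: inner_add_left)
  qed
next
  note P_in = closest_point_subspace_in[OF E] and P_orth = closest_point_subspace_orthogonal[OF E]
  fix c :: real and a :: 'a
  show "closest_point E (c *\<^sub>R a) = c *\<^sub>R closest_point E a"
  proof (rule closest_point_subspace_eqI[OF E])
    show "c *\<^sub>R closest_point E a \<in> E" using P_in E by (simp add: subspace_scale)
    fix e assume "e \<in> E"
    have "c *\<^sub>R a - c *\<^sub>R closest_point E a = c *\<^sub>R (a - closest_point E a)"
      by (simp add: scaleR_diff_right)
    then show "inner (c *\<^sub>R a - c *\<^sub>R closest_point E a) e = 0"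
      using P_orth[OF \<open>e \<in> E\<close>, of a] by (simp only: inner_scaleR_left)
  qed
qed

lemma closest_point_subspace_in_orthogonal_comp:
  fixes E :: "'a::euclidean_space set"
  assumes "subspace E"
  shows "y - closest_point E y \<in> orthogonal_comp E"
  using closest_point_subspace_orthogonal[OF assms]
  by (simp add: orthogonal_comp_def orthogonal_def inner_commute)

lemma inner_closest_point_subspace:
  fixes E :: "'a::euclidean_space set"
  assumes E: "subspace E"
  shows "inner (closest_point E y) z = inner y (closest_point E z)"
proof -
  have "inner (z - closest_point E z) (closest_point E y) = 0"
    and "inner (y - closest_point E y) (closest_point E z) = 0"
    using closest_point_subspace_orthogonal[OF E closest_point_subspace_in[OF E]] by blast+
  then have "inner (closest_point E y) (z - closest_point E z) = 0"
    and "inner (y - closest_point E y) (closest_point E z) = 0"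
    by (simp_all only: inner_commute)
  then show ?thesis by (simp add: inner_diff_left inner_diff_right)
qed

section \<open>Convex functions at relative interior points\<close>

lemma convex_on_half_norm_diff_square:
  fixes v :: "'a::real_inner"
  assumes "convex S"
  shows "convex_on S (\<lambda>x. (1/2) * (norm (x - v))\<^sup>2)"
proof (rule convex_onI[OF _ assms])
  fix t :: real and x y :: 'a
  assume t: "0 < t" "t < 1"
  let ?p = "x - v" and ?s = "y - v"
  have "(1 - t) * (norm ?p)\<^sup>2 + t * (norm ?s)\<^sup>2 - (norm ((1 - t) *\<^sub>R ?p + t *\<^sub>R ?s))\<^sup>2
        = t * (1 - t) * (norm (?p - ?s))\<^sup>2"
    by (simp add: power2_norm_eq_inner inner_add inner_diff algebra_simps inner_commute)
  moreover have "0 \<le> t * (1 - t) * (norm (?p - ?s))\<^sup>2" using t by simp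
  moreover have "(1 - t) *\<^sub>R x + t *\<^sub>R y - v = (1 - t) *\<^sub>R ?p + t *\<^sub>R ?s"
    by (simp add: algebra_simps)
  ultimately show "(1/2) * (norm ((1 - t) *\<^sub>R x + t *\<^sub>R y - v))\<^sup>2
      \<le> (1 - t) * ((1/2) * (norm (x - v))\<^sup>2) + t * ((1/2) * (norm (y - v))\<^sup>2)"
    by (simp add: field_simps)
qed

lemma convex_on_compose_linear:
  assumes "linear L" "convex_on S h" "convex T" "L ` T \<subseteq> S"
  shows "convex_on T (h \<circ> L)"
proof (rule convex_onI[OF _ assms(3)])
  fix t :: real and x y assume t: "0 < t" "t < 1" and xy: "x \<in> T" "y \<in> T"
  have "L ((1 - t) *\<^sub>R x + t *\<^sub>R y) = (1 - t) *\<^sub>R L x + t *\<^sub>R L y"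
    using assms(1) by (simp add: linear_add linear_scale)
  moreover have "L x \<in> S" "L y \<in> S" using assms(4) xy by auto
  ultimately show "(h \<circ> L) ((1 - t) *\<^sub>R x + t *\<^sub>R y) \<le> (1 - t) * (h \<circ> L) x + t * (h \<circ> L) y"
    using convex_onD[OF assms(2), of t "L x" "L y"] t by simp
qed

lemma convex_on_subgradient_at_rel_interior:
  fixes h :: "'a::euclidean_space \<Rightarrow> real"
  assumes conv: "convex_on S h" and x: "x \<in> rel_interior S"
  obtains g where "\<And>y. y \<in> S \<Longrightarrow> h x + inner g (y - x) \<le> h y"
proof -
  let ?epi = "epigraph S h"
  have xS: "x \<in> S" using x rel_interior_subset by blast
  have cvx: "convex ?epi" using conv by (simp add: convex_epigraph)
  have p_epi: "(x, h x) \<in> ?epi" using xS by (simp add: mem_epigraph)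
  have "(x, h x) \<notin> rel_interior ?epi"
  proof
    assume "(x, h x) \<in> rel_interior ?epi"
    then obtain e where e: "e > 0" "ball (x, h x) e \<inter> affine hull ?epi \<subseteq> ?epi"
      unfolding mem_rel_interior_ball by blast
    have "(x, h x + 1) \<in> ?epi" using xS by (simp add: mem_epigraph)
    then have "(1 + e/2) *\<^sub>R (x, h x) + (- e/2) *\<^sub>R (x, h x + 1) \<in> affine hull ?epi"
      using p_epi by (intro mem_affine[OF affine_affine_hull] hull_inc) auto
    moreover have "(1 + e/2) *\<^sub>R (x, h x) + (- e/2) *\<^sub>R (x, h x + 1) = (x, h x - e/2)"
      by (simp add: algebra_simps)
    moreover have "(x, h x - e/2) \<in> ball (x, h x) e"
      using e(1) by (simp add: dist_Pair_Pair)
    ultimately have "(x, h x - e/2) \<in> ?epi" using e(2) by auto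
    then show False using e(1) by (simp add: mem_epigraph)
  qed
  then obtain a where a: "a \<noteq> 0" "\<And>p. p \<in> ?epi \<Longrightarrow> inner a (x, h x) \<le> inner a p"
    "\<And>p. p \<in> rel_interior ?epi \<Longrightarrow> inner a (x, h x) < inner a p"
    using supporting_hyperplane_rel_boundary[OF cvx p_epi] by blast
  obtain a1 \<beta> where a1: "a = (a1, \<beta>)" by (cases a)
  have supp: "inner a1 x + \<beta> * h x \<le> inner a1 y + \<beta> * t" if "y \<in> S" "h y \<le> t" for y t
    using a(2)[of "(y, t)"] that by (simp add: a1 mem_epigraph)
  have "\<beta> \<ge> 0" using supp[OF xS, of "h x + 1"] by (simp add: algebra_simps)
  \<comment> \<open>A vertical hyperplane supporting at a relative interior point of S would contain S.\<close>
  moreover have "\<beta> \<noteq> 0"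
  proof
    assume \<beta>: "\<beta> = 0"
    obtain y t where yt: "(y, t) \<in> rel_interior ?epi"
      using rel_interior_eq_empty[OF cvx] p_epi by fastforce
    then have yS: "y \<in> S" using rel_interior_subset by (fastforce simp: mem_epigraph)
    have less: "inner a1 x < inner a1 y" using a(3)[OF yt] by (simp add: a1 \<beta>)
    obtain m where "m > 1" "\<forall>e. 1 < e \<and> e \<le> m \<longrightarrow> (1 - e) *\<^sub>R y + e *\<^sub>R x \<in> S"
      using convex_rel_interior_if[OF convex_on_imp_convex[OF conv] x] hull_inc[OF yS] by blast
    then have m: "m > 1" "(1 - m) *\<^sub>R y + m *\<^sub>R x \<in> S" by auto
    have "inner a1 x \<le> inner a1 ((1 - m) *\<^sub>R y + m *\<^sub>R x)"
      using supp[OF m(2) order_refl] by (simp add: \<beta>)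
    then have "(m - 1) * inner a1 y \<le> (m - 1) * inner a1 x"
      by (simp add: inner_add_right algebra_simps)
    then show False using m(1) less by simp
  qed
  ultimately have \<beta>_pos: "\<beta> > 0" by simp
  show ?thesis
  proof
    fix y assume "y \<in> S"
    then have "inner a1 x + \<beta> * h x \<le> inner a1 y + \<beta> * h y" using supp by blast
    then have "h x - inner a1 (y - x) / \<beta> \<le> h y"
      using \<beta>_pos by (simp add: inner_diff_right field_simps)
    then show "h x + inner (- (1 / \<beta>) *\<^sub>R a1) (y - x) \<le> h y" by simp
  qed
qed

lemma convex_on_bounded_above_near_rel_interior_0:
  fixes h :: "'a::euclidean_space \<Rightarrow> real"
  assumes conv: "convex_on S h" and ri: "0 \<in> rel_interior S"
  obtains r M where "r > 0" "span S \<inter> cball 0 r \<subseteq> S" "\<And>y. y \<in> span S \<inter> cball 0 r \<Longrightarrow> h y \<le> M"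
proof -
  let ?E = "span S" and ?P = "closest_point (span S)"
  have E: "subspace ?E" by (rule subspace_span)
  have "affine hull S = ?E"
    using ri rel_interior_subset by (intro affine_hull_span_0 hull_inc) blast
  then obtain \<rho> where \<rho>: "\<rho> > 0" "ball 0 \<rho> \<inter> ?E \<subseteq> S"
    using ri unfolding mem_rel_interior_ball by auto
  define U where "U = ?P -` ball 0 \<rho>"
  have "continuous_on UNIV ?P"
    using continuous_on_closest_point[OF subspace_imp_convex[OF E] closed_subspace[OF E]] E
    by (metis empty_iff span_zero)
  then have "open U" unfolding U_def by (simp add: open_vimage)
  moreover have "convex_on U (h \<circ> ?P)"
  proof (rule convex_on_compose_linear[OF linear_closest_point_subspace[OF E] conv])
    show "convex U" unfolding U_def
      by (rule convex_linear_vimage[OF linear_closest_point_subspace[OF E] convex_ball])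
    show "?P ` U \<subseteq> S" using \<rho>(2) closest_point_subspace_in[OF E] by (auto simp: U_def)
  qed
  ultimately have cont: "continuous_on U (h \<circ> ?P)" by (rule convex_on_continuous)
  define K where "K = ?E \<inter> cball 0 (\<rho>/2)"
  have P_K: "?P y = y" if "y \<in> K" for y
    using that closest_point_self by (auto simp: K_def)
  have "K \<subseteq> U" using \<rho>(1) P_K by (auto simp: K_def U_def)
  then have cont_K: "continuous_on K (h \<circ> ?P)" by (rule continuous_on_subset[OF cont])
  have "compact K" unfolding K_def by (intro closed_Int_compact closed_subspace[OF E]) simp
  moreover have "0 \<in> K" using \<rho>(1) span_zero[of S] by (simp add: K_def)
  ultimately obtain ym where "\<forall>y\<in>K. (h \<circ> ?P) y \<le> (h \<circ> ?P) ym"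
    using continuous_attains_sup[OF _ _ cont_K] by blast
  then have bound: "h y \<le> h (?P ym)" if "y \<in> K" for y using that P_K by fastforce
  show ?thesis
  proof (rule that[of "\<rho>/2"])
    show "\<rho>/2 > 0" using \<rho>(1) by simp
    show "span S \<inter> cball 0 (\<rho>/2) \<subseteq> S" using \<rho> by auto
  qed (use bound in \<open>auto simp: K_def\<close>)
qed

section \<open>Fenchel conjugates\<close>

lemma fenchel_young: "ereal (inner y z) - g z \<le> conjugate g y"
  unfolding conjugate_def by (rule SUP_upper) simp

lemma conjugate_ge_neg_at_0: "- g 0 \<le> conjugate g y"
  using fenchel_young[of y 0 g] by (cases "g 0") (auto simp: zero_ereal_def)

lemma conjugate_le_neg_at_0_iff_subdiff:
  assumes "\<bar>g 0\<bar> \<noteq> \<infinity>"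
  shows "conjugate g y \<le> - g 0 \<longleftrightarrow> y \<in> subdiff g 0"
proof -
  have "ereal (inner y z) - g z \<le> - g 0 \<longleftrightarrow> g 0 + ereal (inner y z) \<le> g z" for z
    using assms by (cases "g 0"; cases "g z") auto
  then show ?thesis
    unfolding conjugate_def subdiff_def using assms by (simp add: SUP_le_iff)
qed

lemma
  assumes "subdiff g 0 \<noteq> {}"
  shows argmin_conjugate: "argmin_set (conjugate g) = subdiff g 0"
    and Inf_conjugate: "(INF y. conjugate g y) = - g 0"
proof -
  obtain y0 where y0: "y0 \<in> subdiff g 0" using assms by blast
  then have fin: "\<bar>g 0\<bar> \<noteq> \<infinity>" by (simp add: subdiff_def)
  note iff = conjugate_le_neg_at_0_iff_subdiff[of g, OF fin]
  have "conjugate g y0 \<le> - g 0" using y0 iff by simp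
  then have min: "conjugate g y0 = - g 0" by (rule antisym[OF _ conjugate_ge_neg_at_0])
  show "argmin_set (conjugate g) = subdiff g 0"
  proof (intro set_eqI iffI)
    fix y assume "y \<in> argmin_set (conjugate g)"
    then have "conjugate g y \<le> conjugate g y0" by (simp add: argmin_set_def)
    then show "y \<in> subdiff g 0" using min iff by simp
  next
    fix y assume "y \<in> subdiff g 0"
    then have "conjugate g y \<le> - g 0" using iff by simp
    then show "y \<in> argmin_set (conjugate g)"
      by (auto simp: argmin_set_def intro: order_trans[OF _ conjugate_ge_neg_at_0])
  qed
  show "(INF y. conjugate g y) = - g 0"
  proof (rule antisym)
    show "(INF y. conjugate g y) \<le> - g 0" using min by (metis INF_lower UNIV_I)
    show "- g 0 \<le> (INF y. conjugate g y)" by (rule INF_greatest) (rule conjugate_ge_neg_at_0)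
  qed
qed

lemma conjugate_add_orthogonal:
  assumes dom: "edom g \<subseteq> E" and w: "w \<in> orthogonal_comp E"
  shows "conjugate g (y + w) = conjugate g y"
proof -
  have "ereal (inner (y + w) z) - g z = ereal (inner y z) - g z" for z
  proof (cases "z \<in> edom g")
    case True
    then have "inner z w = 0" using dom w by (auto simp: orthogonal_comp_def orthogonal_def)
    then have "inner (y + w) z = inner y z" by (simp add: inner_add_left inner_commute[of w])
    then show ?thesis by simp
  next
    case False
    then show ?thesis by (simp add: edom_def)
  qed
  then show ?thesis unfolding conjugate_def by simp
qed

lemma subdiff_0_eq_subdiff_closest_point_plus_orthogonal_comp:
  fixes g :: "'a::euclidean_space \<Rightarrow> ereal"
  assumes E: "subspace E" and dom: "edom g \<subseteq> E"
  shows "subdiff g 0 = {a + b | a b. a \<in> subdiff (\<lambda>y. g (closest_point E y)) 0 \<and> b \<in> orthogonal_comp E}"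
    (is "_ = {a + b | a b. a \<in> subdiff ?gE 0 \<and> b \<in> _}")
proof (intro set_eqI iffI)
  note P0 = closest_point_self[OF subspace_0[OF E]]
  fix y assume y: "y \<in> subdiff g 0"
  have "closest_point E y \<in> subdiff ?gE 0"
    using y by (simp add: subdiff_def P0 inner_closest_point_subspace[OF E])
  moreover have "y = closest_point E y + (y - closest_point E y)" by simp
  ultimately show "y \<in> {a + b | a b. a \<in> subdiff ?gE 0 \<and> b \<in> orthogonal_comp E}"
    using closest_point_subspace_in_orthogonal_comp[OF E] by blast
next
  note P0 = closest_point_self[OF subspace_0[OF E]]
  fix y assume "y \<in> {a + b | a b. a \<in> subdiff ?gE 0 \<and> b \<in> orthogonal_comp E}"
  then obtain a b where y: "y = a + b" and a: "a \<in> subdiff ?gE 0" and b: "b \<in> orthogonal_comp E"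
    by blast
  have "g 0 + ereal (inner y z) \<le> g z" for z
  proof (cases "z \<in> E")
    case True
    then have "inner z b = 0" using b by (simp add: orthogonal_comp_def orthogonal_def)
    then have "inner b z = 0" by (simp add: inner_commute)
    moreover have "g 0 + ereal (inner a z) \<le> g (closest_point E z)"
      using a by (simp add: subdiff_def P0)
    then have "g 0 + ereal (inner a z) \<le> g z" using closest_point_self[OF True] by simp
    ultimately show ?thesis by (simp add: y inner_add_left)
  next
    case False
    then have "g z = \<infinity>" using dom by (auto simp: edom_def)
    then show ?thesis by simp
  qed
  then show "y \<in> subdiff g 0" using a by (simp add: subdiff_def P0)
qed

lemma conjugate_le_Liminf:
  assumes "x \<longlonglongrightarrow> y"
  shows "conjugate g y \<le> liminf (\<lambda>k. conjugate g (x k))"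
  unfolding conjugate_def[of g y]
proof (rule SUP_least)
  fix z
  have "(\<lambda>k. ereal (inner (x k) z) - g z) \<longlonglongrightarrow> ereal (inner y z) - g z"
  proof (cases "g z")
    case (real c)
    have "(\<lambda>k. ereal (inner (x k) z - c)) \<longlonglongrightarrow> ereal (inner y z - c)"
      by (intro tendsto_ereal tendsto_intros assms)
    then show ?thesis by (simp add: real)
  qed simp_all
  then have "ereal (inner y z) - g z = liminf (\<lambda>k. ereal (inner (x k) z) - g z)"
    by (simp add: lim_imp_Liminf)
  also have "\<dots> \<le> liminf (\<lambda>k. conjugate g (x k))"
    by (intro Liminf_mono always_eventually allI fenchel_young)
  finally show "ereal (inner y z) - g z \<le> liminf (\<lambda>k. conjugate g (x k))" .
qed

lemma conjugate_ge_norm_closest_point: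
  fixes E :: "'a::euclidean_space set"
  assumes E: "subspace E" and r: "r > 0"
    and bound: "\<And>u. u \<in> E \<inter> cball 0 r \<Longrightarrow> g u \<le> ereal M"
  shows "ereal (r * norm (closest_point E y) - M) \<le> conjugate g y"
proof -
  let ?p = "closest_point E y"
  define u where "u = (if ?p = 0 then 0 else (r / norm ?p) *\<^sub>R ?p)"
  have uE: "u \<in> E"
    using closest_point_subspace_in[OF E] subspace_0[OF E] subspace_scale[OF E] by (simp add: u_def)
  have "norm u \<le> r" using r by (simp add: u_def)
  then have gu: "g u \<le> ereal M" using bound uE by simp
  have "inner y u = inner ?p u"
    using inner_closest_point_subspace[OF E, of y u] closest_point_self[OF uE] by simp
  also have "\<dots> = r * norm ?p" by (simp add: u_def dot_square_norm power2_eq_square)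
  finally have "ereal (r * norm ?p - M) = ereal (inner y u) - ereal M" by simp
  also have "\<dots> \<le> ereal (inner y u) - g u" by (rule ereal_minus_mono[OF order_refl gu])
  also have "\<dots> \<le> conjugate g y" by (rule fenchel_young)
  finally show ?thesis .
qed

section \<open>Distance to a set\<close>

lemma edist_set_eq_infdist:
  assumes "S \<noteq> {}"
  shows "edist_set x S = ereal (infdist x S)"
proof -
  have "bdd_below (dist x ` S)" by (rule bdd_belowI[of _ 0]) auto
  then show ?thesis
    using ereal_Inf'[of "dist x ` S"] assms by (simp add: edist_set_def infdist_notempty image_comp)
qed

lemma infdist_tendsto_0_if_limit_points_in:
  fixes w :: "nat \<Rightarrow> 'a::heine_borel"
  assumes B: "bounded B" "eventually (\<lambda>t. w t \<in> B) sequentially"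
    and lim: "\<And>r l. strict_mono r \<Longrightarrow> (w \<circ> r) \<longlonglongrightarrow> l \<Longrightarrow> l \<in> K"
  shows "(\<lambda>t. infdist (w t) K) \<longlonglongrightarrow> 0"
proof (rule order_tendstoI)
  fix a :: real assume "a < 0"
  then show "eventually (\<lambda>t. a < infdist (w t) K) sequentially"
    using infdist_nonneg less_le_trans by (intro always_eventually allI) blast
next
  fix a :: real assume a: "0 < a"
  show "eventually (\<lambda>t. infdist (w t) K < a) sequentially"
  proof (rule ccontr)
    assume contra: "\<not> ?thesis"
    have "\<not> eventually (\<lambda>t. w t \<in> B \<longrightarrow> infdist (w t) K < a) sequentially"
    proof
      assume "eventually (\<lambda>t. w t \<in> B \<longrightarrow> infdist (w t) K < a) sequentially"
      with B(2) have "eventually (\<lambda>t. infdist (w t) K < a) sequentially"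
        by eventually_elim blast
      with contra show False ..
    qed
    from not_eventually_sequentiallyD[OF this] obtain \<sigma> :: "nat \<Rightarrow> nat"
      where \<sigma>: "strict_mono \<sigma>" "\<And>n. w (\<sigma> n) \<in> B" "\<And>n. a \<le> infdist (w (\<sigma> n)) K"
      by (auto simp: not_less)
    have "bounded (range (w \<circ> \<sigma>))" using \<sigma>(2) by (auto intro: bounded_subset[OF B(1)])
    then obtain l \<tau> where \<tau>: "strict_mono \<tau>" "(w \<circ> \<sigma> \<circ> \<tau>) \<longlonglongrightarrow> l"
      using bounded_imp_convergent_subsequence by blast
    have "l \<in> K" using lim[OF strict_mono_o[OF \<sigma>(1) \<tau>(1)]] \<tau>(2) by (simp add: o_assoc)
    have "(\<lambda>k. infdist ((w \<circ> \<sigma> \<circ> \<tau>) k) K) \<longlonglongrightarrow> infdist l K"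
      by (intro tendsto_infdist \<tau>(2))
    then have "a \<le> infdist l K" by (rule LIMSEQ_le_const) (use \<sigma>(3) in auto)
    then show False using \<open>l \<in> K\<close> a by simp
  qed
qed

section \<open>The projection problem and its dual\<close>

lemma inner_matrix_vector_transpose:
  fixes A :: "real^'n::finite^'m::finite"
  shows "inner y (A *v x) = inner (transpose A *v y) x"
  by (simp add: dot_lmul_matrix)

lemma neg_inner_minus_half_norm_diff_square:
  fixes w x v :: "'a::real_inner"
  shows "- inner w x - (1/2) * (norm (x - v))\<^sup>2
    = (1/2) * (norm (w - v))\<^sup>2 - (1/2) * (norm v)\<^sup>2 - (1/2) * (norm (x - v + w))\<^sup>2"
  unfolding power2_norm_eq_inner
  by (simp add: inner_diff_left inner_diff_right inner_add_left inner_add_right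
      inner_commute[of x w] inner_commute[of v w] inner_commute[of v x] field_simps)

locale projection_dual =
  fixes A :: "real^'n::finite^'m::finite" and D :: "(real^'m) set" and vbar :: "real^'n"
  assumes convex_D: "convex D"
    and zero_rel_interior: "0 \<in> rel_interior {c - A *v x | c x. c \<in> D}"
begin

definition Q :: "(real^'m) set" where "Q = {c - A *v x | c x. c \<in> D}"

definition f :: "real^'n \<Rightarrow> real" where "f x = (1/2) * (norm (x - vbar))\<^sup>2"

definition q :: "real^'m \<Rightarrow> ereal" where "q y = (INF x\<in>{x. A *v x + y \<in> D}. ereal (f x))"

\<comment> \<open>Meaningful on Q only: outside Q, q is infinite and q_real is 0.\<close>
definition q_real :: "real^'m \<Rightarrow> real" where "q_real y = real_of_ereal (q y)"

definition d :: "real^'m \<Rightarrow> ereal" where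
  "d y = ereal ((1/2) * (norm (transpose A *v y - vbar))\<^sup>2 - (1/2) * (norm vbar)\<^sup>2) + support_fun D y"

lemma mem_Q_iff: "z \<in> Q \<longleftrightarrow> (\<exists>x. A *v x + z \<in> D)"
  unfolding Q_def by (auto simp: algebra_simps)

lemma zero_rel_interior_Q: "0 \<in> rel_interior Q"
  using zero_rel_interior by (simp add: Q_def)

lemma zero_in_Q: "0 \<in> Q"
  using zero_rel_interior_Q rel_interior_subset by blast

lemma D_nonempty: "D \<noteq> {}"
  using zero_in_Q by (auto simp: mem_Q_iff)

lemma convex_Q: "convex Q"
proof (rule convexI)
  fix z1 z2 and u v :: real
  assume z: "z1 \<in> Q" "z2 \<in> Q" and uv: "0 \<le> u" "0 \<le> v" "u + v = 1"
  obtain x1 x2 where x: "A *v x1 + z1 \<in> D" "A *v x2 + z2 \<in> D" using z by (auto simp: mem_Q_iff)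
  have "A *v (u *\<^sub>R x1 + v *\<^sub>R x2) + (u *\<^sub>R z1 + v *\<^sub>R z2)
      = u *\<^sub>R (A *v x1 + z1) + v *\<^sub>R (A *v x2 + z2)"
    by (simp add: algebra_simps)
  also have "\<dots> \<in> D" using convexD[OF convex_D x] uv by blast
  finally show "u *\<^sub>R z1 + v *\<^sub>R z2 \<in> Q" by (auto simp: mem_Q_iff)
qed

lemma q_le: "A *v x + z \<in> D \<Longrightarrow> q z \<le> ereal (f x)"
  unfolding q_def by (rule INF_lower) simp

lemma q_nonneg: "0 \<le> q z"
  unfolding q_def f_def by (rule INF_greatest) simp

lemma q_infinite: "z \<notin> Q \<Longrightarrow> q z = \<infinity>"
  unfolding q_def mem_Q_iff by (simp add: top_ereal_def)

lemma q_finite: "z \<in> Q \<Longrightarrow> q z = ereal (q_real z)"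
proof -
  assume "z \<in> Q"
  then obtain x where "A *v x + z \<in> D" by (auto simp: mem_Q_iff)
  then have "\<bar>q z\<bar> \<noteq> \<infinity>" using q_le[of x z] q_nonneg[of z] by auto
  then show ?thesis unfolding q_real_def by (rule ereal_real'[symmetric])
qed

lemma edom_q: "edom q = Q"
  using q_infinite q_finite by (force simp: edom_def)

lemma q_real_le: "A *v x + z \<in> D \<Longrightarrow> q_real z \<le> f x"
  using q_le q_finite mem_Q_iff by (metis ereal_less_eq(3))

lemma q_real_approx:
  assumes "z \<in> Q" "e > 0"
  obtains x where "A *v x + z \<in> D" "f x < q_real z + e"
proof -
  have "q z < ereal (q_real z + e)" using q_finite[OF assms(1)] assms(2) by simp
  then show ?thesis using that unfolding q_def by (auto simp: INF_less_iff)
qed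

lemma convex_on_q_real: "convex_on Q q_real"
proof (rule convex_onI[OF _ convex_Q])
  fix t :: real and z1 z2 assume t: "0 < t" "t < 1" and z: "z1 \<in> Q" "z2 \<in> Q"
  show "q_real ((1 - t) *\<^sub>R z1 + t *\<^sub>R z2) \<le> (1 - t) * q_real z1 + t * q_real z2"
  proof (rule field_le_epsilon)
    fix e :: real assume e: "0 < e"
    obtain x1 where x1: "A *v x1 + z1 \<in> D" "f x1 < q_real z1 + e" using q_real_approx[OF z(1) e] .
    obtain x2 where x2: "A *v x2 + z2 \<in> D" "f x2 < q_real z2 + e" using q_real_approx[OF z(2) e] .
    let ?x = "(1 - t) *\<^sub>R x1 + t *\<^sub>R x2"
    have "A *v ?x + ((1 - t) *\<^sub>R z1 + t *\<^sub>R z2) = (1 - t) *\<^sub>R (A *v x1 + z1) + t *\<^sub>R (A *v x2 + z2)"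
      by (simp add: algebra_simps)
    also have "\<dots> \<in> D" using convexD[OF convex_D x1(1) x2(1)] t by simp
    finally have "q_real ((1 - t) *\<^sub>R z1 + t *\<^sub>R z2) \<le> f ?x" by (rule q_real_le)
    also have "\<dots> \<le> (1 - t) * f x1 + t * f x2"
      using convex_onD[OF convex_on_half_norm_diff_square[OF convex_UNIV], of t x1 x2] t
      by (simp add: f_def)
    also have "\<dots> \<le> (1 - t) * (q_real z1 + e) + t * (q_real z2 + e)"
      using x1(2) x2(2) t by (intro add_mono mult_left_mono) auto
    finally show "q_real ((1 - t) *\<^sub>R z1 + t *\<^sub>R z2) \<le> (1 - t) * q_real z1 + t * q_real z2 + e"
      by (simp add: algebra_simps)
  qed
qed

lemma d_eq_conjugate: "d y = conjugate q y"
proof (rule antisym)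
  define w where "w = transpose A *v y"
  define k where "k = (1/2) * (norm (w - vbar))\<^sup>2 - (1/2) * (norm vbar)\<^sup>2"
  have d_k: "d y = ereal k + support_fun D y" by (simp add: d_def k_def w_def)
  have k_ge: "inner y z - f x \<le> inner y (A *v x + z) + k" for x z
  proof -
    have "- inner w x - f x \<le> k"
      using neg_inner_minus_half_norm_diff_square[of w x vbar] zero_le_power2[of "norm (x - vbar + w)"]
      unfolding f_def k_def by linarith
    moreover have "inner y (A *v x + z) = inner w x + inner y z"
      by (simp add: inner_add_right inner_matrix_vector_transpose w_def)
    ultimately show ?thesis by linarith
  qed
  \<comment> \<open>The supremum of - inner w x - f x over x is attained at x = vbar - w.\<close>
  have k_eq: "inner y c + k = inner y (c - A *v (vbar - w)) - f (vbar - w)" for c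
    using neg_inner_minus_half_norm_diff_square[of w "vbar - w" vbar]
    by (simp add: f_def k_def w_def inner_diff_right inner_matrix_vector_transpose)
  have "d y = (SUP c\<in>D. ereal (inner y c)) + ereal k"
    by (simp add: d_k support_fun_def add.commute)
  also have "\<dots> = (SUP c\<in>D. ereal (inner y c) + ereal k)"
    by (rule SUP_ereal_add_left[symmetric, OF D_nonempty]) simp
  also have "\<dots> \<le> conjugate q y"
  proof (rule SUP_least)
    fix c assume c: "c \<in> D"
    let ?z = "c - A *v (vbar - w)"
    have q_z: "q ?z \<le> ereal (f (vbar - w))" using c by (intro q_le) simp
    have "ereal (inner y c + k) = ereal (inner y ?z) - ereal (f (vbar - w))"
      unfolding k_eq by simp
    also have "\<dots> \<le> ereal (inner y ?z) - q ?z" by (rule ereal_minus_mono[OF order_refl q_z])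
    also have "\<dots> \<le> conjugate q y" by (rule fenchel_young)
    finally show "ereal (inner y c) + ereal k \<le> conjugate q y" by simp
  qed
  finally show "d y \<le> conjugate q y" .
  show "conjugate q y \<le> d y"
    unfolding conjugate_def
  proof (rule SUP_least)
    fix z
    show "ereal (inner y z) - q z \<le> d y"
    proof (cases "z \<in> Q")
      case False
      then show ?thesis by (simp add: q_infinite)
    next
      case True
      then have X: "{x. A *v x + z \<in> D} \<noteq> {}" by (auto simp: mem_Q_iff)
      have "ereal (inner y z) - q z = (SUP x\<in>{x. A *v x + z \<in> D}. ereal (inner y z) - ereal (f x))"
        unfolding q_def by (rule SUP_ereal_minus_right[OF X, symmetric]) simp
      also have "\<dots> \<le> d y"
      proof (rule SUP_least)
        fix x assume "x \<in> {x. A *v x + z \<in> D}"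
        then have "ereal (inner y (A *v x + z)) \<le> support_fun D y"
          unfolding support_fun_def by (intro SUP_upper) simp
        then have "ereal k + ereal (inner y (A *v x + z)) \<le> d y"
          unfolding d_k by (rule add_left_mono)
        moreover have "ereal (inner y z - f x) \<le> ereal k + ereal (inner y (A *v x + z))"
          using k_ge[of z x] by simp
        ultimately have "ereal (inner y z - f x) \<le> d y" by (rule order_trans[rotated])
        then show "ereal (inner y z) - ereal (f x) \<le> d y" by simp
      qed
      finally show ?thesis .
    qed
  qed
qed


definition E :: "(real^'m) set" where "E = span Q"

lemma subspace_E: "subspace E"
  unfolding E_def by (rule subspace_span)

lemma edom_q_subset_E: "edom q \<subseteq> E"
  unfolding E_def edom_q by (rule span_superset)

lemma subdiff_q_nonempty: "subdiff q 0 \<noteq> {}"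
proof -
  obtain g where g: "\<And>z. z \<in> Q \<Longrightarrow> q_real 0 + inner g (z - 0) \<le> q_real z"
    using convex_on_subgradient_at_rel_interior[OF convex_on_q_real zero_rel_interior_Q] by blast
  have "q 0 + ereal (inner g (z - 0)) \<le> q z" for z
    using g[of z] q_finite[of z] q_finite[OF zero_in_Q] q_infinite[of z] by (cases "z \<in> Q") auto
  then have "g \<in> subdiff q 0" using q_finite[OF zero_in_Q] by (simp add: subdiff_def)
  then show ?thesis by blast
qed

lemma d_ge: "ereal (- q_real 0) \<le> d y"
  using conjugate_ge_neg_at_0[of q y] by (simp add: d_eq_conjugate q_finite[OF zero_in_Q])

lemma argmin_d: "argmin_set d = subdiff q 0"
  using argmin_conjugate[OF subdiff_q_nonempty] d_eq_conjugate by (metis ext)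

lemma Inf_d: "(INF y. d y) = ereal (- q_real 0)"
  using Inf_conjugate[OF subdiff_q_nonempty] by (simp add: d_eq_conjugate q_finite[OF zero_in_Q])

lemma mem_argmin_d_iff: "y \<in> argmin_set d \<longleftrightarrow> d y \<le> ereal (- q_real 0)"
  using conjugate_le_neg_at_0_iff_subdiff[of q y] q_finite[OF zero_in_Q]
  by (simp add: argmin_d d_eq_conjugate)

lemma argmin_d_eq_subdiff_plus_orthogonal_comp:
  "argmin_set d = {a + b | a b. a \<in> subdiff (\<lambda>y. q (closest_point E y)) 0 \<and> b \<in> orthogonal_comp E}"
  unfolding argmin_d
  by (rule subdiff_0_eq_subdiff_closest_point_plus_orthogonal_comp[OF subspace_E edom_q_subset_E])

lemma d_add_orthogonal: "w \<in> orthogonal_comp E \<Longrightarrow> d (y + w) = d y"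
  using conjugate_add_orthogonal[OF edom_q_subset_E] by (simp add: d_eq_conjugate)

lemma d_closest_point: "d (closest_point E y) = d y"
  using d_add_orthogonal[OF closest_point_subspace_in_orthogonal_comp[OF subspace_E], of "closest_point E y" y]
  by simp

lemma d_coercive:
  obtains r M where "r > 0" "q_real 0 \<le> M" "\<And>y. ereal (r * norm (closest_point E y) - M) \<le> d y"
proof -
  obtain r M where r: "r > 0" and sub: "span Q \<inter> cball 0 r \<subseteq> Q"
    and M: "\<And>u. u \<in> span Q \<inter> cball 0 r \<Longrightarrow> q_real u \<le> M"
    using convex_on_bounded_above_near_rel_interior_0[OF convex_on_q_real zero_rel_interior_Q] by blast
  have "q u \<le> ereal M" if "u \<in> E \<inter> cball 0 r" for u
    using that sub M q_finite by (auto simp: E_def)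
  from conjugate_ge_norm_closest_point[OF subspace_E r this]
  show ?thesis using M[of 0] r by (intro that[OF r]) (simp_all add: d_eq_conjugate span_zero)
qed

lemma subdiff_d_gap:
  assumes g: "g \<in> subdiff d y" and y0: "y0 \<in> argmin_set d"
  obtains \<delta> where "d y = ereal \<delta>" "\<delta> \<le> - q_real 0 + norm g * (norm y0 + norm (closest_point E y))"
proof -
  let ?p = "closest_point E y"
  obtain \<delta> where dy: "d y = ereal \<delta>" using g by (cases "d y") (auto simp: subdiff_def)
  \<comment> \<open>y0 + (y - ?p) is again a minimiser, and its distance to y is at most norm y0 + norm ?p.\<close>
  have "y0 + (y - ?p) \<in> argmin_set d"
    using y0 d_add_orthogonal[OF closest_point_subspace_in_orthogonal_comp[OF subspace_E]]
    by (simp add: mem_argmin_d_iff)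
  then have "d y + ereal (inner g (y0 + (y - ?p) - y)) \<le> ereal (- q_real 0)"
    using g order_trans unfolding subdiff_def mem_argmin_d_iff by blast
  then have "\<delta> \<le> - q_real 0 - inner g (y0 - ?p)" by (simp add: dy)
  also have "\<dots> \<le> - q_real 0 + norm g * (norm y0 + norm ?p)"
    using Cauchy_Schwarz_ineq2[of g "y0 - ?p"] norm_triangle_ineq4[of y0 ?p]
      mult_left_mono[of "norm (y0 - ?p)" "norm y0 + norm ?p" "norm g"]
    by (smt (verit) norm_ge_zero)
  finally show ?thesis using that dy by blast
qed

lemma small_subgradient_bound:
  obtains c B where "c > 0" "B \<ge> 0"
    "\<And>y g. g \<in> subdiff d y \<Longrightarrow> norm g \<le> c \<Longrightarrow>
       norm (closest_point E y) \<le> B \<and> d y \<le> ereal (- q_real 0 + norm g * B)"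
proof -
  obtain r M where r: "r > 0" and "q_real 0 \<le> M"
    and coercive: "\<And>y. ereal (r * norm (closest_point E y) - M) \<le> d y"
    using d_coercive by blast
  define m where "m = - q_real 0"
  have Mm: "0 \<le> M + m" using \<open>q_real 0 \<le> M\<close> by (simp add: m_def)
  obtain y0 where y0: "y0 \<in> argmin_set d" using argmin_d subdiff_q_nonempty by blast
  define B where "B = 2 * norm y0 + 2 * (M + m) / r"
  show ?thesis
  proof (rule that[of "r/2" B])
    show "r/2 > 0" "B \<ge> 0" using r Mm by (simp_all add: B_def)
    fix y g assume g: "g \<in> subdiff d y" and small: "norm g \<le> r/2"
    let ?p = "closest_point E y"
    obtain \<delta> where dy: "d y = ereal \<delta>" and \<delta>_le: "\<delta> \<le> m + norm g * (norm y0 + norm ?p)"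
      using subdiff_d_gap[OF g y0] unfolding m_def by blast
    have "norm g * (norm y0 + norm ?p) \<le> r/2 * (norm y0 + norm ?p)"
      using small by (intro mult_right_mono) auto
    moreover have "r * norm ?p - M \<le> \<delta>" using coercive[of y] by (simp add: dy)
    moreover have "r/2 * (norm y0 + 2 * (M + m) / r) = r/2 * norm y0 + (M + m)"
      using r by (simp add: field_simps)
    ultimately have "r/2 * norm ?p \<le> r/2 * (norm y0 + 2 * (M + m) / r)"
      using \<delta>_le by (simp add: distrib_left)
    then have p_le: "norm ?p \<le> norm y0 + 2 * (M + m) / r" using r by simp
    have "norm g * (norm y0 + norm ?p) \<le> norm g * B"
      using p_le by (intro mult_left_mono) (auto simp: B_def)
    then have "d y \<le> ereal (- q_real 0 + norm g * B)" using \<delta>_le by (simp add: dy m_def)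
    moreover have "norm ?p \<le> B" unfolding B_def using p_le norm_ge_zero[of y0] by linarith
    ultimately show "norm ?p \<le> B \<and> d y \<le> ereal (- q_real 0 + norm g * B)" by simp
  qed
qed

lemma infdist_argmin_d_le_closest_point:
  "infdist y (argmin_set d) \<le> infdist (closest_point E y) (argmin_set d)"
proof -
  let ?K = "argmin_set d"
  have K_ne: "?K \<noteq> {}" using argmin_d subdiff_q_nonempty by simp
  have "infdist y ?K \<le> dist (closest_point E y) k" if "k \<in> ?K" for k
  proof -
    have "k + (y - closest_point E y) \<in> ?K"
      using that d_add_orthogonal[OF closest_point_subspace_in_orthogonal_comp[OF subspace_E]]
      by (simp add: mem_argmin_d_iff)
    then have "infdist y ?K \<le> dist y (k + (y - closest_point E y))" by (rule infdist_le)
    also have "\<dots> = dist (closest_point E y) k" by (simp add: dist_norm algebra_simps)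
    finally show ?thesis .
  qed
  then show ?thesis unfolding infdist_notempty[OF K_ne] by (rule cINF_greatest[OF K_ne])
qed

lemma eventually_near_argmin_d:
  fixes z :: "nat \<Rightarrow> real^'m"
  assumes lim: "(\<lambda>t. edist_set 0 (subdiff d (z t))) \<longlonglongrightarrow> 0"
  obtains B where "B \<ge> 0" "\<And>\<epsilon>. \<epsilon> > 0 \<Longrightarrow> eventually (\<lambda>t. norm (closest_point E (z t)) \<le> B
      \<and> d (z t) \<le> ereal (- q_real 0 + \<epsilon> * B)) sequentially"
proof -
  obtain c B where c: "c > 0" and B: "B \<ge> 0" and bound: "\<And>y g. g \<in> subdiff d y \<Longrightarrow> norm g \<le> c \<Longrightarrow>
      norm (closest_point E y) \<le> B \<and> d y \<le> ereal (- q_real 0 + norm g * B)"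
    using small_subgradient_bound by blast
  have "eventually (\<lambda>t. norm (closest_point E (z t)) \<le> B
      \<and> d (z t) \<le> ereal (- q_real 0 + \<epsilon> * B)) sequentially" if \<epsilon>: "\<epsilon> > 0" for \<epsilon>
  proof -
    define \<eta> where "\<eta> = min c \<epsilon>"
    have \<eta>: "0 < \<eta>" "\<eta> \<le> c" "\<eta> \<le> \<epsilon>" using c \<epsilon> by (simp_all add: \<eta>_def)
    then have "0 < ereal \<eta>" by simp
    from order_tendstoD(2)[OF lim this] show ?thesis
    proof eventually_elim
      case (elim t)
      then obtain g where g: "g \<in> subdiff d (z t)" "norm g < \<eta>"
        by (auto simp: edist_set_def INF_less_iff)
      have "norm g * B \<le> \<epsilon> * B" using g(2) \<eta>(3) B by (intro mult_right_mono) auto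
      then show ?case using bound[OF g(1)] g(2) \<eta>(2) by (auto intro: order_trans)
    qed
  qed
  with B show ?thesis using that by blast
qed

lemma tendsto_d_Inf_if_subdiff_tendsto_0:
  fixes z :: "nat \<Rightarrow> real^'m"
  assumes lim: "(\<lambda>t. edist_set 0 (subdiff d (z t))) \<longlonglongrightarrow> 0"
  shows "(\<lambda>t. d (z t)) \<longlonglongrightarrow> (INF y. d y)"
proof -
  obtain B where B: "B \<ge> 0" and near: "\<And>\<epsilon>. \<epsilon> > 0 \<Longrightarrow> eventually (\<lambda>t. norm (closest_point E (z t)) \<le> B
      \<and> d (z t) \<le> ereal (- q_real 0 + \<epsilon> * B)) sequentially"
    using eventually_near_argmin_d[OF lim] by blast
  show ?thesis unfolding Inf_d
  proof (rule order_tendstoI)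
    fix a assume "ereal (- q_real 0) < a"
    then obtain a' where a': "- q_real 0 < a'" "ereal a' < a" using ereal_dense2 by force
    define \<epsilon> where "\<epsilon> = (a' + q_real 0) / (B + 1)"
    have "\<epsilon> > 0" using a' B by (simp add: \<epsilon>_def)
    have "\<epsilon> * B < a' + q_real 0" using a' B by (simp add: \<epsilon>_def field_simps)
    then have "ereal (- q_real 0 + \<epsilon> * B) < ereal a'" by simp
    then have lt: "ereal (- q_real 0 + \<epsilon> * B) < a" using a'(2) by (rule less_trans)
    from near[OF \<open>\<epsilon> > 0\<close>] show "eventually (\<lambda>t. d (z t) < a) sequentially"
      by eventually_elim (use lt in \<open>auto intro: le_less_trans\<close>)
  next
    fix a assume "a < ereal (- q_real 0)"
    then show "eventually (\<lambda>t. a < d (z t)) sequentially"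
      using d_ge less_le_trans by (intro always_eventually allI) auto
  qed
qed

lemma tendsto_edist_argmin_d_if_subdiff_tendsto_0:
  fixes z :: "nat \<Rightarrow> real^'m"
  assumes lim: "(\<lambda>t. edist_set 0 (subdiff d (z t))) \<longlonglongrightarrow> 0"
  shows "(\<lambda>t. edist_set (z t) (argmin_set d)) \<longlonglongrightarrow> 0"
proof -
  let ?K = "argmin_set d"
  obtain B where "\<And>\<epsilon>. \<epsilon> > 0 \<Longrightarrow> eventually (\<lambda>t. norm (closest_point E (z t)) \<le> B
      \<and> d (z t) \<le> ereal (- q_real 0 + \<epsilon> * B)) sequentially"
    using eventually_near_argmin_d[OF lim] by blast
  from this[of 1] have near: "eventually (\<lambda>t. norm (closest_point E (z t)) \<le> B) sequentially"
    by (auto elim: eventually_mono)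
  have "(\<lambda>t. infdist (closest_point E (z t)) ?K) \<longlonglongrightarrow> 0"
  proof (rule infdist_tendsto_0_if_limit_points_in)
    show "bounded (cball (0::real^'m) B)" by simp
    show "eventually (\<lambda>t. closest_point E (z t) \<in> cball 0 B) sequentially"
      using near by eventually_elim simp
    fix r l assume r: "strict_mono r" and l: "((\<lambda>t. closest_point E (z t)) \<circ> r) \<longlonglongrightarrow> l"
    have "(\<lambda>k. d (z (r k))) \<longlonglongrightarrow> ereal (- q_real 0)"
      using LIMSEQ_subseq_LIMSEQ[OF tendsto_d_Inf_if_subdiff_tendsto_0[OF lim] r]
      by (simp add: Inf_d o_def)
    then have "liminf (\<lambda>k. d (closest_point E (z (r k)))) = ereal (- q_real 0)"
      by (simp add: d_closest_point lim_imp_Liminf)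
    moreover have "d l \<le> liminf (\<lambda>k. d (closest_point E (z (r k))))"
      using conjugate_le_Liminf[OF l, of q] by (simp add: d_eq_conjugate o_def)
    ultimately show "l \<in> ?K" by (simp add: mem_argmin_d_iff)
  qed
  then have "(\<lambda>t. infdist (z t) ?K) \<longlonglongrightarrow> 0"
    by (rule tendsto_sandwich[rotated 2, OF tendsto_const])
       (simp_all add: infdist_nonneg infdist_argmin_d_le_closest_point)
  then show ?thesis
    using argmin_d subdiff_q_nonempty by (simp add: edist_set_eq_infdist zero_ereal_def tendsto_ereal)
qed

end

section \<open>Block structure\<close>

lemma rel_interior_Inter_linear_vimage:
  fixes L :: "'i \<Rightarrow> 'a::euclidean_space \<Rightarrow> 'b::euclidean_space"
  assumes "finite I" "\<And>i. i \<in> I \<Longrightarrow> linear (L i)" "\<And>i. i \<in> I \<Longrightarrow> convex (C i)"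
    and "\<And>i. i \<in> I \<Longrightarrow> L i x \<in> rel_interior (C i)"
  shows "x \<in> rel_interior (\<Inter>i\<in>I. L i -` C i)"
proof -
  have ri: "rel_interior (L i -` C i) = L i -` rel_interior (C i)" if i: "i \<in> I" for i
  proof (rule rel_interior_convex_linear_preimage[OF assms(2,3)[OF i]])
    show "L i -` rel_interior (C i) \<noteq> {}" using assms(4)[OF i] by blast
  qed
  have "x \<in> \<Inter> (rel_interior ` (\<lambda>i. L i -` C i) ` I)" using assms(4) ri by auto
  moreover have "rel_interior (\<Inter>i\<in>I. L i -` C i) = \<Inter> (rel_interior ` (\<lambda>i. L i -` C i) ` I)"
    using assms(1-3) calculation by (intro convex_rel_interior_finite_Inter) (auto intro: convex_linear_vimage)
  ultimately show ?thesis by simp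
qed

lemma zero_rel_interior_diff_range:
  fixes A :: "real^'n::finite^'m::finite"
  assumes "convex D" "A *v x0 \<in> rel_interior D"
  shows "0 \<in> rel_interior {c - A *v x | c x. c \<in> D}"
proof -
  let ?R = "range ((*v) A)"
  have R: "subspace ?R" by (rule subspace_UNIV[THEN linear_subspace_image[OF matrix_vector_mul_linear]])
  have neg: "A *v (- x) = - (A *v x)" for x by (rule linear_neg[OF matrix_vector_mul_linear])
  have "{c - A *v x | c x. c \<in> D} = D + ?R"
  proof (intro set_eqI iffI)
    fix y assume "y \<in> {c - A *v x | c x. c \<in> D}"
    then obtain c x where "c \<in> D" "y = c + A *v (- x)" by (auto simp: neg)
    then show "y \<in> D + ?R" by (auto intro: set_plus_intro)
  next
    fix y assume "y \<in> D + ?R"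
    then obtain c x where "c \<in> D" "y = c - A *v (- x)" by (auto simp: set_plus_def neg)
    then show "y \<in> {c - A *v x | c x. c \<in> D}" by blast
  qed
  moreover have "rel_interior (D + ?R) = rel_interior D + ?R"
    using rel_interior_sum[OF assms(1) subspace_imp_convex[OF R]] rel_interior_affine[OF subspace_imp_affine[OF R]]
    by simp
  moreover have "A *v x0 + A *v (- x0) = 0" by (simp add: neg)
  ultimately show ?thesis using assms(2) set_plus_intro[of "A *v x0" _ "A *v (- x0)" ?R] by force
qed

lemma linear_block_part: "linear (block_part blk i)"
  by (rule linearI) (auto simp: block_part_def vec_eq_iff)

lemma sum_matrix_vector_mult:
  fixes M :: "'i \<Rightarrow> real^'n::finite^'m::finite"
  shows "finite S \<Longrightarrow> (\<Sum>i\<in>S. M i) *v x = (\<Sum>i\<in>S. M i *v x)"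
  by (induction S rule: finite_induct) (auto simp: matrix_vector_mult_add_rdistrib)

lemma matrix_vector_mult_zero_row:
  fixes M :: "real^'n::finite^'m::finite"
  shows "row j M = 0 \<Longrightarrow> (M *v x) $ j = 0"
  by (simp add: row_def vec_eq_iff matrix_vector_mult_def)

lemma block_part_sum_blocks:
  fixes Ab :: "nat \<Rightarrow> real^'n::finite^'m::finite"
  assumes blocks: "\<forall>i<l. \<forall>j. blk j \<noteq> i \<longrightarrow> row j (Ab i) = 0" and i: "i < l"
  shows "block_part blk i ((\<Sum>i<l. Ab i) *v x) = Ab i *v x"
proof -
  have "block_part blk i ((\<Sum>i<l. Ab i) *v x) $ j = (Ab i *v x) $ j" for j
  proof (cases "blk j = i")
    case True
    have "((\<Sum>i<l. Ab i) *v x) $ j = (\<Sum>i'<l. (Ab i' *v x) $ j)"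
      by (simp add: sum_matrix_vector_mult sum_component)
    also have "\<dots> = (\<Sum>i'<l. if i' = i then (Ab i *v x) $ j else 0)"
      using blocks True by (intro sum.cong) (auto intro: matrix_vector_mult_zero_row)
    finally show ?thesis using True i by (simp add: block_part_def)
  next
    case False
    then show ?thesis using blocks i by (simp add: block_part_def matrix_vector_mult_zero_row)
  qed
  then show ?thesis by (simp add: vec_eq_iff)
qed

theorem proposition3p3:
  fixes l :: nat
    and blk :: "'m::finite \<Rightarrow> nat"
    and C :: "nat \<Rightarrow> (real^'m) set"
    and Ab :: "nat \<Rightarrow> real^'n::finite^'m"
    and vbar :: "real^'n"
    and A :: "real^'n^'m"
    and D :: "(real^'m) set"
    and f :: "real^'n \<Rightarrow> real"
    and d :: "real^'m \<Rightarrow> ereal"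
    and dstar :: ereal
    and q :: "real^'m \<Rightarrow> ereal"
    and E :: "(real^'m) set"
    and qE :: "real^'m \<Rightarrow> ereal"
  assumes l_pos: "l \<ge> 1"
    and blk_range: "\<forall>j. blk j < l"
    and blk_nonempty: "\<forall>i<l. \<exists>j. blk j = i"
    and C_sub: "\<forall>i<l. C i \<subseteq> block_space blk i"
    and C_ne: "\<forall>i<l. C i \<noteq> {}"
    and C_closed: "\<forall>i<l. closed (C i)"
    and C_convex: "\<forall>i<l. convex (C i)"
    and Ab_block: "\<forall>i<l. \<forall>j. blk j \<noteq> i \<longrightarrow> row j (Ab i) = 0"
    and Ab_nz: "\<forall>i<l. Ab i \<noteq> 0"
    and qual: "(\<Inter>i<l. {x. Ab i *v x \<in> rel_interior (C i)}) \<noteq> {}"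
    and A_def: "A = (\<Sum>i<l. Ab i)"
    and D_def: "D = {y. \<forall>i<l. block_part blk i y \<in> C i}"
    and f_def: "\<forall>x. f x = (1/2) * (norm (x - vbar))\<^sup>2"
    and d_def: "\<forall>y. d y = ereal ((1/2) * (norm (transpose A *v y - vbar))\<^sup>2
                               - (1/2) * (norm vbar)\<^sup>2) + support_fun D y"
    and dstar_def: "dstar = (INF y. d y)"
    and q_def: "\<forall>y. q y = (INF x\<in>{x. A *v x + y \<in> D}. ereal (f x))"
    and E_def: "E = span (edom q)"
    and qE_def: "\<forall>y. qE y = q (proj_sub E y)"
  shows "0 \<in> rel_interior (edom q)
    \<and> E = span {c - A *v x | c x. c \<in> D}
    \<and> (\<forall>y. d y = conjugate q y)
    \<and> argmin_set d = {a + b | a b. a \<in> subdiff qE 0 \<and> b \<in> orthogonal_comp E}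
    \<and> argmin_set d \<noteq> {}
    \<and> (\<forall>z :: nat \<Rightarrow> real^'m.
          ((\<lambda>t. edist_set 0 (subdiff d (z t))) \<longlonglongrightarrow> 0) \<longrightarrow>
            ((\<lambda>t. d (z t)) \<longlonglongrightarrow> dstar) \<and>
            ((\<lambda>t. edist_set (z t) (argmin_set d)) \<longlonglongrightarrow> 0))"
proof -
  obtain x0 where x0: "\<forall>i<l. Ab i *v x0 \<in> rel_interior (C i)" using qual by blast
  have blocks: "block_part blk i (A *v x) = Ab i *v x" if "i < l" for i x
    unfolding A_def by (rule block_part_sum_blocks[OF Ab_block that])
  have D_Inter: "D = (\<Inter>i\<in>{..<l}. block_part blk i -` C i)" unfolding D_def by auto
  have convex_D: "convex D"
    unfolding D_Inter using C_convex by (auto intro!: convex_INT convex_linear_vimage linear_block_part)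
  have "A *v x0 \<in> rel_interior D"
    unfolding D_Inter using C_convex x0 blocks
    by (intro rel_interior_Inter_linear_vimage linear_block_part) auto
  then interpret L: projection_dual A D vbar
    by unfold_locales (use convex_D zero_rel_interior_diff_range[OF convex_D] in auto)
  have q_eq: "q = L.q" using q_def f_def by (simp add: fun_eq_iff L.q_def L.f_def)
  have d_eq: "d = L.d" using d_def by (simp add: fun_eq_iff L.d_def)
  have E_eq: "E = L.E" unfolding E_def q_eq L.edom_q L.E_def ..
  have qE_eq: "qE = (\<lambda>y. L.q (closest_point L.E y))"
    using qE_def by (simp add: fun_eq_iff q_eq E_eq proj_sub_def)
  show ?thesis
    unfolding q_eq d_eq E_eq qE_eq dstar_def L.edom_q
    using L.zero_rel_interior_Q L.d_eq_conjugate L.argmin_d_eq_subdiff_plus_orthogonal_comp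
      L.argmin_d L.subdiff_q_nonempty L.tendsto_d_Inf_if_subdiff_tendsto_0
      L.tendsto_edist_argmin_d_if_subdiff_tendsto_0
    unfolding L.E_def L.Q_def by blast
qed

end
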